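(* Let $n\ge 2$, and let $L=(\ell_1,\dots,\ell_n)\in\mathbb{R}^n$ and $K=(k_1,\dots,k_n)\in\mathbb{R}^n$ satisfy $0<k_i<\ell_i$ for all $1\le i\le n$. Let $\Lambda\subset\mathbb{R}^n$ be the lattice generated by the rows of the $n\times n$ matrix $$\mathbf{G}=\begin{bmatrix} \ell_1 & -k_2 & 0 & \cdots & 0 & 0\\ 0 & \ell_2 & -k_3 & \cdots & 0 & 0\\ \vdots & & \ddots & \ddots & & \vdots\\ 0 & 0 & \cdots & \ell_{n-2} & -k_{n-1} & 0\\ 0 & 0 & \cdots & 0 & \ell_{n-1} & -k_n\\ -k_1 & 0 & \cdots & 0 & 0 & \ell_n \end{bmatrix},$$ i.e. row $i$ ($1\le i\le n-1$) has $\ell_i$ in column $i$ and $-k_{i+1}$ in column $i+1$, and row $n$ has $-k_1$ in column $1$ and $\ell_n$ in column $n$, all other entries being $0$. Then $\Lambda$ is a lattice tiling of $\mathbb{R}^n$ with $\mathcal{S}_{L,K}$.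
   Context: For $L,K\in\mathbb{R}^n$ with $0<k_i<\ell_i$, the $n$-dimensional chair is $\mathcal{S}_{L,K}=\{(x_1,\dots,x_n)\in\mathbb{R}^n: 0\le x_i<\ell_i \text{ for all } i, \text{ and there exists } j \text{ with } x_j<\ell_j-k_j\}$. For a set $\mathcal{S}\subset\mathbb{R}^n$ and $U\in\mathbb{R}^n$, $U+\mathcal{S}=\{U+X: X\in\mathcal{S}\}$. A set $P\subseteq\mathbb{R}^n$ is a packing of $\mathbb{R}^n$ with $\mathcal{S}$ if the translates $X+\mathcal{S}$, $X\in P$, have pairwise non-intersecting interiors; it is a tiling if moreover the union of the closures of these translates is $\mathbb{R}^n$. A lattice is the set of all integer linear combinations of $n$ linearly independent vectors of $\mathbb{R}^n$ (its basis); a lattice $\Lambda$ is a lattice tiling with $\mathcal{S}$ if its point set is a tiling with $\mathcal{S}$. *)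

theory Defs
  imports "HOL-Analysis.Analysis"
begin

definition chair :: "real^'n \<Rightarrow> real^'n \<Rightarrow> (real^'n) set" where
  "chair L K = {x. (\<forall>i. 0 \<le> x$i \<and> x$i < L$i) \<and> (\<exists>j. x$j < L$j - K$j)}"

definition translate :: "'a::ab_group_add \<Rightarrow> 'a set \<Rightarrow> 'a set" where
  "translate U S = (\<lambda>X. U + X) ` S"

definition is_packing :: "(real^'n) set \<Rightarrow> (real^'n) set \<Rightarrow> bool" where
  "is_packing S P \<longleftrightarrow> (\<forall>X\<in>P. \<forall>Y\<in>P. X \<noteq> Y \<longrightarrow>
      interior (translate X S) \<inter> interior (translate Y S) = {})"

definition is_tiling :: "(real^'n) set \<Rightarrow> (real^'n) set \<Rightarrow> bool" where
  "is_tiling S P \<longleftrightarrow> is_packing S P \<and> (\<Union>X\<in>P. closure (translate X S)) = UNIV"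

definition lattice_gen :: "('n::finite \<Rightarrow> real^'n) \<Rightarrow> (real^'n) set" where
  "lattice_gen B = {(\<Sum>i\<in>UNIV. of_int (c i) *\<^sub>R B i) | c. True}"

definition is_lattice_tiling :: "(real^'n) set \<Rightarrow> ('n::finite \<Rightarrow> real^'n) \<Rightarrow> bool" where
  "is_lattice_tiling S B \<longleftrightarrow> inj B \<and> independent (range B) \<and> is_tiling S (lattice_gen B)"

text \<open>Coordinates are labelled 1..n via an enumeration e (e 0 = coordinate 1, ...).
  cyc_succ e j is the cyclically next coordinate.\<close>
definition cyc_succ :: "(nat \<Rightarrow> 'n::finite) \<Rightarrow> 'n \<Rightarrow> 'n" where
  "cyc_succ e j = e ((inv_into {..<CARD('n)} e j + 1) mod CARD('n))"

definition G_row :: "(nat \<Rightarrow> 'n::finite) \<Rightarrow> real^'n \<Rightarrow> real^'n \<Rightarrow> 'n \<Rightarrow> real^'n" where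
  "G_row e L K j = (\<chi> c. if c = j then L$j else if c = cyc_succ e j then - K$c else 0)"

end

theory Submission
  imports Defs
begin

(* Write the coordinates in the cyclic order 1 -> 2 -> ... -> n -> 1 given by e.  The point
   z - sum_i c_i G_i lies in the box [0, l_j) in coordinate j exactly when
   c_j = floor ((z_j + c_(j-1) k_j) / l_j).  Starting from an integer t and applying these
   floors once around the cycle gives an integer map F with F t <= F (t + 1) <= F t + 1 and
   asymptotic slope prod_j k_j / l_j < 1, so some t has F t = F (t + 1) = t.  The first
   equation closes the cycle (covering); the second rules out that all coordinates are
   >= l_j - k_j, since then the whole chain would shift by one.  For uniqueness, the difference
   of two coefficient vectors is nonnegative and nonincreasing along the cycle once it is
   nonnegative at one point, hence constant, and a positive constant violates the chair
   condition.  The same contraction around the cycle shows that the rows of G are linearly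
   independent. *)

lemma int_down_crossing:
  fixes g :: "int \<Rightarrow> int"
  assumes "0 \<le> g a" "g b < 0" "a \<le> b"
  shows "\<exists>t. 0 \<le> g t \<and> g (t + 1) < 0"
proof -
  have "0 \<le> g a \<Longrightarrow> g (a + int d) < 0 \<Longrightarrow> \<exists>t. 0 \<le> g t \<and> g (t + 1) < 0" for d
  proof (induction d arbitrary: a)
    case (Suc d)
    show ?case
    proof (cases "g (a + 1) < 0")
      case False
      then show ?thesis using Suc.IH[of "a + 1"] Suc.prems by (simp add: add.assoc)
    qed (use Suc.prems in blast)
  qed simp
  moreover have "b = a + int (nat (b - a))" using assms(3) by simp
  ultimately show ?thesis using assms(1,2) by metis
qed

lemma eq_if_le_along_bij:
  fixes f :: "'a::finite \<Rightarrow> 'b::ordered_cancel_comm_monoid_add"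
  assumes "bij s" and "\<And>i. f (s i) \<le> f i"
  shows "f (s i) = f i"
proof -
  have "(\<Sum>i\<in>UNIV. f (s i)) = sum f UNIV"
    using assms(1) by (rule sum.reindex_bij_betw)
  then show ?thesis using assms(2) by (rule sum_mono_inv) auto
qed

lemma floor_residue_bounds:
  fixes a w :: real
  assumes "0 < a"
  shows "0 \<le> w - of_int \<lfloor>w / a\<rfloor> * a" and "w - of_int \<lfloor>w / a\<rfloor> * a < a"
  using floor_divide_lower[OF assms, of w] floor_divide_upper[OF assms, of w]
  by (simp_all add: algebra_simps)

lemma int_in_range_if_close:
  fixes p q :: int and k l :: real
  assumes "0 < k" "k < l" "0 \<le> p" "\<bar>of_int q * l - of_int p * k\<bar> < l"
  shows "0 \<le> q \<and> q \<le> p"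
proof
  have "0 \<le> of_int p * k" "of_int p * k \<le> of_int p * l"
    using assms(1-3) by (simp_all add: mult_left_mono)
  then have "(- 1) * l < of_int q * l" "of_int q * l < (of_int p + 1) * l"
    using assms(4) by (simp_all add: abs_less_iff algebra_simps)
  moreover have l: "0 < l" using assms(1,2) by linarith
  ultimately have "- 1 < real_of_int q" "real_of_int q < of_int p + 1"
    using mult_less_cancel_right_pos[OF l, of "- 1" "of_int q"]
      mult_less_cancel_right_pos[OF l, of "of_int q" "of_int p + 1"] by linarith+
  then show "0 \<le> q" "q \<le> p" by linarith+
qed

lemma mem_translate_iff: "z \<in> translate X S \<longleftrightarrow> z - X \<in> S"
  unfolding translate_def by (auto simp: image_iff intro!: bexI[of _ "z - X"])

lemma is_tiling_if_unique_translates: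
  assumes cover: "\<And>z. \<exists>X\<in>P. z - X \<in> S"
    and disjoint: "\<And>z X Y. X \<in> P \<Longrightarrow> Y \<in> P \<Longrightarrow> z - X \<in> S \<Longrightarrow> z - Y \<in> S \<Longrightarrow> X = Y"
  shows "is_tiling S P"
  unfolding is_tiling_def is_packing_def
proof (intro conjI ballI impI)
  fix X Y assume "X \<in> P" "Y \<in> P" "X \<noteq> Y"
  then have "translate X S \<inter> translate Y S = {}" using disjoint by (auto simp: mem_translate_iff)
  then show "interior (translate X S) \<inter> interior (translate Y S) = {}"
    using interior_subset by blast
next
  have "z \<in> (\<Union>X\<in>P. closure (translate X S))" for z
    using cover[of z] closure_subset mem_translate_iff by blast
  then show "(\<Union>X\<in>P. closure (translate X S)) = UNIV" by blast
qed

locale floor_chain =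
  fixes a b z :: "nat \<Rightarrow> real"
  assumes pos: "\<And>k. 0 < b k" and less: "\<And>k. b k < a k"
begin

fun chain :: "int \<Rightarrow> nat \<Rightarrow> int" where
  "chain t 0 = t"
| "chain t (Suc k) = \<lfloor>(z k + of_int (chain t k) * b k) / a k\<rfloor>"

lemma ratio_bounds: "0 < b k / a k" "b k / a k < 1"
  using pos[of k] less[of k] by auto

definition residue :: "int \<Rightarrow> nat \<Rightarrow> real" where
  "residue t k = z k + of_int (chain t k) * b k - of_int (chain t (Suc k)) * a k"

lemma residue_bounds: "0 \<le> residue t k" "residue t k < a k"
  using floor_residue_bounds[of "a k" "z k + of_int (chain t k) * b k"] pos[of k] less[of k]
  by (simp_all add: residue_def)

lemma chain_step_mono: "chain t k \<le> chain (t + 1) k \<and> chain (t + 1) k \<le> chain t k + 1"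
proof (induction k)
  case (Suc k)
  let ?w = "\<lambda>s. z k + of_int (chain s k) * b k"
  have ab: "0 < b k" "0 < a k" using pos[of k] less[of k] by auto
  have "?w t \<le> ?w (t + 1)" using Suc ab by (simp add: mult_right_mono)
  then have lower: "\<lfloor>?w t / a k\<rfloor> \<le> \<lfloor>?w (t + 1) / a k\<rfloor>"
    using ab by (intro floor_mono divide_right_mono) auto
  have "?w (t + 1) \<le> ?w t + a k"
    using Suc ab less[of k] mult_right_mono[of "of_int (chain (t + 1) k)" "of_int (chain t k) + 1" "b k"]
    by (simp add: algebra_simps)
  then have "?w (t + 1) / a k \<le> ?w t / a k + 1"
    using ab by (simp add: divide_le_eq algebra_simps add_divide_distrib)
  then have "\<lfloor>?w (t + 1) / a k\<rfloor> \<le> \<lfloor>?w t / a k\<rfloor> + 1"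
    by (metis floor_add_int floor_mono of_int_1)
  with lower show ?case by simp
qed simp

lemma chain_shift_if_large_residues:
  assumes "\<And>k. k < n \<Longrightarrow> a k - b k \<le> residue t k" and "k \<le> n"
  shows "chain (t + 1) k = chain t k + 1"
  using assms(2)
proof (induction k)
  case (Suc k)
  let ?w = "z k + of_int (chain t k + 1) * b k"
  have ak: "0 < a k" using pos[of k] less[of k] by linarith
  have "a k - b k \<le> residue t k" using assms(1) Suc.prems by simp
  then have "(of_int (chain t (Suc k)) + 1) * a k \<le> ?w"
    by (simp add: residue_def algebra_simps)
  then have "of_int (chain t (Suc k)) + 1 \<le> ?w / a k" using ak by (simp add: pos_le_divide_eq)
  moreover have "?w < (of_int (chain t (Suc k)) + 2) * a k"
    using residue_bounds(2)[of t k] less[of k] by (simp add: residue_def algebra_simps)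
  then have "?w / a k < of_int (chain t (Suc k)) + 2" using ak by (simp add: pos_divide_less_eq)
  ultimately have "\<lfloor>?w / a k\<rfloor> = chain t (Suc k) + 1" by linarith
  then show ?case using Suc by simp
qed simp

lemma chain_affine_bound: "\<exists>B. \<forall>t. \<bar>of_int (chain t k) - (\<Prod>i<k. b i / a i) * of_int t\<bar> \<le> B"
proof (induction k)
  case 0
  show ?case by (rule exI[of _ 0]) simp
next
  case (Suc k)
  then obtain B where B: "\<bar>of_int (chain t k) - (\<Prod>i<k. b i / a i) * of_int t\<bar> \<le> B" for t
    by blast
  define q where "q = b k / a k"
  have q: "0 < q" using ratio_bounds(1) by (simp add: q_def)
  have "\<bar>of_int (chain t (Suc k)) - (\<Prod>i<Suc k. b i / a i) * of_int t\<bar>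
          \<le> 1 + \<bar>z k / a k\<bar> + q * B" for t
  proof -
    define w where "w = (z k + of_int (chain t k) * b k) / a k"
    define \<delta> where "\<delta> = of_int (chain t k) - (\<Prod>i<k. b i / a i) * of_int t"
    have "\<bar>w - (\<Prod>i<Suc k. b i / a i) * of_int t\<bar> = \<bar>z k / a k + q * \<delta>\<bar>"
      by (simp add: w_def q_def \<delta>_def add_divide_distrib algebra_simps)
    also have "\<dots> \<le> \<bar>z k / a k\<bar> + q * \<bar>\<delta>\<bar>"
      using abs_triangle_ineq[of "z k / a k" "q * \<delta>"] q by (simp add: abs_mult)
    also have "\<dots> \<le> \<bar>z k / a k\<bar> + q * B"
      using mult_left_mono[OF B[of t], of q] q by (simp add: \<delta>_def)
    finally have "\<bar>w - (\<Prod>i<Suc k. b i / a i) * of_int t\<bar> \<le> \<bar>z k / a k\<bar> + q * B" .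
    moreover have "chain t (Suc k) = \<lfloor>w\<rfloor>" by (simp add: w_def)
    moreover have "\<bar>of_int \<lfloor>w\<rfloor> - w\<bar> \<le> 1" by linarith
    ultimately show ?thesis by linarith
  qed
  then show ?case by blast
qed

lemma chain_fixpoint:
  assumes "1 \<le> n"
  shows "\<exists>t. chain t n = t \<and> chain (t + 1) n = t"
proof -
  define \<rho> where "\<rho> = (\<Prod>i<n. b i / a i)"
  obtain m where n: "n = Suc m" using assms by (cases n) auto
  have prefix: "(\<Prod>i<m. b i / a i) \<le> 1"
    using ratio_bounds by (intro prod_le_1) (auto intro: less_imp_le)
  have "\<rho> = (\<Prod>i<m. b i / a i) * (b m / a m)" by (simp add: \<rho>_def n)
  also have "\<dots> \<le> b m / a m"
    using mult_right_mono[OF prefix, of "b m / a m"] ratio_bounds(1)[of m] by simp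
  also have "\<dots> < 1" by (rule ratio_bounds(2))
  finally have "\<rho> < 1" .
  obtain B where B: "\<bar>of_int (chain t n) - \<rho> * of_int t\<bar> \<le> B" for t
    using chain_affine_bound[of n] unfolding \<rho>_def by blast
  define g where "g t = chain t n - t" for t
  define T where "T = \<lceil>B / (1 - \<rho>)\<rceil> + 1"
  have "B / (1 - \<rho>) < of_int T" unfolding T_def by linarith
  then have T: "B < (1 - \<rho>) * of_int T"
    using \<open>\<rho> < 1\<close> by (simp add: pos_divide_less_eq mult.commute)
  have "0 \<le> B" using B[of 0] by linarith
  with T have "0 < (1 - \<rho>) * of_int T" by linarith
  with \<open>\<rho> < 1\<close> have "- T \<le> T" by (simp add: zero_less_mult_iff)
  moreover have "0 \<le> g (- T)" using B[of "- T"] T by (simp add: g_def algebra_simps abs_le_iff)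
  moreover have "g T < 0" using B[of T] T by (simp add: g_def algebra_simps abs_le_iff)
  ultimately obtain t where t: "0 \<le> g t" "g (t + 1) < 0" using int_down_crossing by blast
  then show ?thesis using chain_step_mono[of t n] unfolding g_def by (intro exI[of _ t]) linarith
qed

end

locale cyclic_enumeration =
  fixes e :: "nat \<Rightarrow> 'n::finite"
  assumes enum: "bij_betw e {..<CARD('n)} UNIV" and card_ge_2: "2 \<le> CARD('n)"
begin

lemma enum_inj: "k < CARD('n) \<Longrightarrow> k' < CARD('n) \<Longrightarrow> e k = e k' \<Longrightarrow> k = k'"
  using enum by (meson bij_betw_def inj_onD lessThan_iff)

lemma enum_surj: "\<exists>k<CARD('n). e k = j"
  using enum by (metis UNIV_I bij_betw_iff_bijections lessThan_iff)

lemma cyc_succ_enum: "k < CARD('n) \<Longrightarrow> cyc_succ e (e k) = e (Suc k mod CARD('n))"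
  using enum by (simp add: cyc_succ_def bij_betw_inv_into_left)

lemma cyc_succ_enum_Suc: "Suc k < CARD('n) \<Longrightarrow> cyc_succ e (e k) = e (Suc k)"
  by (simp add: cyc_succ_enum)

lemma cyc_succ_enum_last: "cyc_succ e (e (CARD('n) - 1)) = e 0"
  using cyc_succ_enum[of "CARD('n) - 1"] by simp

lemma surj_cyc_succ: "surj (cyc_succ e)"
proof -
  have "j \<in> range (cyc_succ e)" for j
  proof -
    obtain k where k: "k < CARD('n)" "e k = j" using enum_surj by blast
    show ?thesis
    proof (cases k)
      case 0
      then show ?thesis using k cyc_succ_enum_last by (metis rangeI)
    next
      case (Suc k')
      then show ?thesis using k cyc_succ_enum_Suc[of k'] by (metis rangeI)
    qed
  qed
  then show ?thesis by blast
qed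

lemma bij_cyc_succ: "bij (cyc_succ e)"
  using surj_cyc_succ finite_UNIV_surj_inj[OF finite] by (simp add: bij_def)

lemma cyc_succ_neq: "cyc_succ e j \<noteq> j"
proof
  assume fixed: "cyc_succ e j = j"
  obtain k where k: "k < CARD('n)" "e k = j" using enum_surj by blast
  then have "e (Suc k mod CARD('n)) = e k" using fixed cyc_succ_enum[OF k(1)] by simp
  then have wrap: "Suc k mod CARD('n) = k" using k(1) by (intro enum_inj) auto
  show False
  proof (cases "Suc k < CARD('n)")
    case False
    then have "Suc k = CARD('n)" using k(1) by simp
    then have "k = 0" using wrap by (metis mod_self)
    then show False using \<open>Suc k = CARD('n)\<close> card_ge_2 by linarith
  qed (use wrap in simp)
qed

lemma cyc_succ_induct [case_names first succ]:
  assumes "P (e 0)" and "\<And>j. P j \<Longrightarrow> P (cyc_succ e j)"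
  shows "P j"
proof -
  have "k < CARD('n) \<Longrightarrow> P (e k)" for k
  proof (induction k)
    case (Suc k)
    then have "P (cyc_succ e (e k))" using assms(2) by simp
    with Suc.prems show ?case by (simp add: cyc_succ_enum_Suc)
  qed (use assms(1) in simp)
  moreover obtain k where "k < CARD('n)" "e k = j" using enum_surj by blast
  ultimately show ?thesis by blast
qed

end

locale chair_lattice = cyclic_enumeration e for e :: "nat \<Rightarrow> 'n::finite" +
  fixes L K :: "real^'n"
  assumes K_pos: "0 < K $ i" and K_less_L: "K $ i < L $ i"
begin

abbreviation lattice_point :: "('n \<Rightarrow> int) \<Rightarrow> real^'n" where
  "lattice_point c \<equiv> \<Sum>i\<in>UNIV. of_int (c i) *\<^sub>R G_row e L K i"

lemma G_row_combination_nth: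
  "(\<Sum>i\<in>UNIV. u i *\<^sub>R G_row e L K i) $ cyc_succ e j
     = u (cyc_succ e j) * L $ cyc_succ e j - u j * K $ cyc_succ e j"
proof -
  let ?s = "cyc_succ e j"
  have "u i * G_row e L K i $ ?s
      = (if i = ?s then u ?s * L $ ?s else 0) + (if i = j then - u j * K $ ?s else 0)" for i
    using cyc_succ_neq[of j] bij_cyc_succ by (auto simp: G_row_def bij_def inj_eq)
  then show ?thesis by (simp add: sum.distrib)
qed

lemma inj_G_row: "inj (G_row e L K)"
proof (rule injI, rule ccontr)
  fix i i' assume eq: "G_row e L K i = G_row e L K i'" and "i \<noteq> i'"
  then have "G_row e L K i' $ i \<in> {0, - K $ i}" by (simp add: G_row_def)
  moreover have "G_row e L K i $ i = L $ i" by (simp add: G_row_def)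
  ultimately show False using eq K_pos[of i] K_less_L[of i] by auto
qed

lemma independent_G_rows: "independent (range (G_row e L K))"
proof (rule real_vector.independent_if_scalars_zero)
  fix f x
  assume zero: "(\<Sum>x\<in>range (G_row e L K). f x *\<^sub>R x) = 0" and x: "x \<in> range (G_row e L K)"
  define u where "u i = f (G_row e L K i)" for i
  have "(\<Sum>i\<in>UNIV. u i *\<^sub>R G_row e L K i) = 0"
    using zero sum.reindex[OF inj_G_row, of "\<lambda>x. f x *\<^sub>R x"] by (simp add: u_def o_def)
  then have "u (cyc_succ e j) * L $ cyc_succ e j = u j * K $ cyc_succ e j" for j
    using G_row_combination_nth[of u j] by simp
  then have rel: "\<bar>u (cyc_succ e j)\<bar> * L $ cyc_succ e j = \<bar>u j\<bar> * K $ cyc_succ e j" for j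
    using K_pos[of "cyc_succ e j"] K_less_L[of "cyc_succ e j"] by (metis abs_mult abs_of_pos less_trans)
  have "\<bar>u (cyc_succ e j)\<bar> \<le> \<bar>u j\<bar>" for j
  proof -
    let ?s = "cyc_succ e j"
    have "\<bar>u ?s\<bar> * L $ ?s \<le> \<bar>u j\<bar> * L $ ?s"
      using rel[of j] mult_left_mono[OF less_imp_le[OF K_less_L[of ?s]], of "\<bar>u j\<bar>"] by simp
    then show ?thesis using K_pos[of ?s] K_less_L[of ?s] by simp
  qed
  then have "\<bar>u (cyc_succ e j)\<bar> = \<bar>u j\<bar>" for j
    by (rule eq_if_le_along_bij[OF bij_cyc_succ])
  then have "\<bar>u j\<bar> * L $ cyc_succ e j = \<bar>u j\<bar> * K $ cyc_succ e j" for j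
    using rel[of j] by simp
  then have "u j = 0" for j
    using K_less_L[of "cyc_succ e j"] by (metis abs_eq_0 less_irrefl mult_cancel_left)
  then show "f x = 0" using x by (auto simp: u_def)
qed simp

lemma chair_nth_bounds:
  assumes "x \<in> chair L K"
  shows "0 \<le> x $ j" "x $ j < L $ j"
  using assms by (auto simp: chair_def)

lemma lattice_point_diff_nth:
  fixes z :: "real^'n" and c c' :: "'n \<Rightarrow> int"
  shows "(z - lattice_point c) $ cyc_succ e j - (z - lattice_point c') $ cyc_succ e j
     = of_int (c' (cyc_succ e j) - c (cyc_succ e j)) * L $ cyc_succ e j
       - of_int (c' j - c j) * K $ cyc_succ e j"
proof -
  have "(z - lattice_point c) $ cyc_succ e j - (z - lattice_point c') $ cyc_succ e j
      = lattice_point c' $ cyc_succ e j - lattice_point c $ cyc_succ e j"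
    by simp
  also have "\<dots> = of_int (c' (cyc_succ e j)) * L $ cyc_succ e j - of_int (c' j) * K $ cyc_succ e j
      - (of_int (c (cyc_succ e j)) * L $ cyc_succ e j - of_int (c j) * K $ cyc_succ e j)"
    by (simp only: G_row_combination_nth)
  finally show ?thesis by (simp add: algebra_simps)
qed

lemma coeff_diff_step:
  assumes X: "z - lattice_point c \<in> chair L K" and Y: "z - lattice_point c' \<in> chair L K"
    and le: "c j \<le> c' j"
  shows "c (cyc_succ e j) \<le> c' (cyc_succ e j)
    \<and> c' (cyc_succ e j) - c (cyc_succ e j) \<le> c' j - c j"
proof -
  let ?s = "cyc_succ e j"
  have "\<bar>of_int (c' ?s - c ?s) * L $ ?s - of_int (c' j - c j) * K $ ?s\<bar> < L $ ?s"
    using lattice_point_diff_nth[where z = z and c = c and c' = c' and j = j]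
      chair_nth_bounds[OF X, of ?s] chair_nth_bounds[OF Y, of ?s]
    by (simp only: abs_less_iff) linarith
  then have "0 \<le> c' ?s - c ?s \<and> c' ?s - c ?s \<le> c' j - c j"
    using le by (intro int_in_range_if_close[OF K_pos[of ?s] K_less_L[of ?s]]) simp_all
  then show ?thesis by simp
qed

lemma coeffs_eq_if_le_at_start:
  assumes X: "z - lattice_point c \<in> chair L K" and Y: "z - lattice_point c' \<in> chair L K"
    and start: "c (e 0) \<le> c' (e 0)"
  shows "c = c'"
proof -
  define d where "d j = c' j - c j" for j
  have nonneg: "0 \<le> d j" for j
  proof (induction j rule: cyc_succ_induct)
    case first
    show ?case using start by (simp add: d_def)
  next
    case (succ j)
    then show ?case using coeff_diff_step[OF X Y] by (simp add: d_def)
  qed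
  have "d (cyc_succ e j) \<le> d j" for j
    using coeff_diff_step[OF X Y] nonneg[of j] by (simp add: d_def)
  then have "d (cyc_succ e j) = d j" for j
    by (rule eq_if_le_along_bij[OF bij_cyc_succ])
  then have const: "d j = d (e 0)" for j
    by (induction j rule: cyc_succ_induct) simp_all
  have "d (e 0) = 0"
  proof (rule ccontr)
    assume "d (e 0) \<noteq> 0"
    then have D: "1 \<le> d (e 0)" using nonneg[of "e 0"] by simp
    obtain j where j: "(z - lattice_point c) $ j < L $ j - K $ j" using X by (auto simp: chair_def)
    obtain i where i: "cyc_succ e i = j" using surj_cyc_succ by (metis surjD)
    have "(z - lattice_point c) $ j - (z - lattice_point c') $ j
        = of_int (d j) * L $ j - of_int (d i) * K $ j"
      using lattice_point_diff_nth[where z = z and c = c and c' = c' and j = i] i by (simp add: d_def)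
    also have "\<dots> = of_int (d (e 0)) * (L $ j - K $ j)"
      using const[of i] const[of j] by (simp add: algebra_simps)
    finally have "(z - lattice_point c) $ j - (z - lattice_point c') $ j
        = of_int (d (e 0)) * (L $ j - K $ j)" .
    moreover have "1 * (L $ j - K $ j) \<le> of_int (d (e 0)) * (L $ j - K $ j)"
      using D K_less_L[of j] by (intro mult_right_mono) auto
    ultimately show False using j chair_nth_bounds(1)[OF Y, of j] by simp
  qed
  then have "d j = 0" for j using const[of j] by simp
  then show ?thesis by (simp add: d_def fun_eq_iff)
qed

lemma translates_disjoint:
  assumes "X \<in> lattice_gen (G_row e L K)" "Y \<in> lattice_gen (G_row e L K)"
    and "z - X \<in> chair L K" "z - Y \<in> chair L K"
  shows "X = Y"
proof -
  obtain c c' where "X = lattice_point c" "Y = lattice_point c'"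
    using assms(1,2) by (auto simp: lattice_gen_def)
  with assms(3,4) show ?thesis
    using coeffs_eq_if_le_at_start[of z c c'] coeffs_eq_if_le_at_start[of z c' c]
    by (cases "c (e 0) \<le> c' (e 0)") auto
qed

context
  fixes z :: "real^'n"
begin

interpretation floor_chain "\<lambda>k. L $ e k" "\<lambda>k. K $ e k" "\<lambda>k. z $ e k"
  using K_pos K_less_L by unfold_locales

definition chain_coeffs :: "int \<Rightarrow> 'n \<Rightarrow> int" where
  "chain_coeffs t j = chain t (Suc (inv_into {..<CARD('n)} e j))"

lemma chain_coeffs_enum: "k < CARD('n) \<Longrightarrow> chain_coeffs t (e k) = chain t (Suc k)"
  using enum by (simp add: chain_coeffs_def bij_betw_inv_into_left)

lemma chain_coeffs_nth:
  assumes closed: "chain t CARD('n) = t" and k: "k < CARD('n)"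
  shows "(z - lattice_point (chain_coeffs t)) $ e k = residue t k"
proof -
  obtain p where p: "cyc_succ e (e p) = e k" "chain_coeffs t (e p) = chain t k"
  proof (cases k)
    case 0
    then show ?thesis using that[of "CARD('n) - 1"] cyc_succ_enum_last
        chain_coeffs_enum[of "CARD('n) - 1"] closed card_ge_2 by simp
  next
    case (Suc k')
    then show ?thesis using that[of k'] k cyc_succ_enum_Suc[of k'] chain_coeffs_enum[of k'] by simp
  qed
  have "(z - lattice_point (chain_coeffs t)) $ e k
      = z $ e k - (of_int (chain_coeffs t (e k)) * L $ e k - of_int (chain_coeffs t (e p)) * K $ e k)"
    using G_row_combination_nth[of "\<lambda>i. of_int (chain_coeffs t i)" "e p"] p(1) by simp
  then show ?thesis using p(2) chain_coeffs_enum[OF k] by (simp add: residue_def algebra_simps)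
qed

lemma translate_in_chair_if_chain_fixpoint:
  assumes t: "chain t CARD('n) = t" "chain (t + 1) CARD('n) = t"
  shows "z - lattice_point (chain_coeffs t) \<in> chair L K"
proof -
  let ?x = "z - lattice_point (chain_coeffs t)"
  have "0 \<le> ?x $ j \<and> ?x $ j < L $ j" for j
  proof -
    obtain k where "k < CARD('n)" "e k = j" using enum_surj by blast
    then show ?thesis using chain_coeffs_nth[OF t(1), of k] residue_bounds[of t k] by simp
  qed
  moreover have "\<exists>j. ?x $ j < L $ j - K $ j"
  proof (rule ccontr)
    assume none: "\<not> ?thesis"
    have "L $ e k - K $ e k \<le> residue t k" if "k < CARD('n)" for k
      using none chain_coeffs_nth[OF t(1) that] by (metis not_less)
    then have "chain (t + 1) CARD('n) = chain t CARD('n) + 1"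
      using chain_shift_if_large_residues[where n = "CARD('n)" and k = "CARD('n)"] by blast
    then show False using t by simp
  qed
  ultimately show ?thesis by (simp add: chair_def)
qed

lemma translates_cover: "\<exists>X\<in>lattice_gen (G_row e L K). z - X \<in> chair L K"
proof -
  have "1 \<le> CARD('n)" using card_ge_2 by simp
  then obtain t where "chain t CARD('n) = t" "chain (t + 1) CARD('n) = t"
    using chain_fixpoint by blast
  then have "z - lattice_point (chain_coeffs t) \<in> chair L K"
    by (rule translate_in_chair_if_chain_fixpoint)
  moreover have "lattice_point (chain_coeffs t) \<in> lattice_gen (G_row e L K)"
    by (auto simp: lattice_gen_def)
  ultimately show ?thesis by blast
qed

end

end

theorem mainTheorem1:
  fixes L K :: "real^'n" and e :: "nat \<Rightarrow> 'n"
  assumes "CARD('n) \<ge> 2"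
    and "bij_betw e {..<CARD('n)} UNIV"
    and "\<forall>i. 0 < K$i \<and> K$i < L$i"
  shows "is_lattice_tiling (chair L K) (G_row e L K)"
proof -
  interpret chair_lattice e L K
    using assms by unfold_locales auto
  have "is_tiling (chair L K) (lattice_gen (G_row e L K))"
    using translates_cover translates_disjoint by (rule is_tiling_if_unique_translates)
  then show ?thesis
    unfolding is_lattice_tiling_def using inj_G_row independent_G_rows by blast
qed

end
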